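(* Let $a>0$, $q\neq0$, $p\in(4,6)$, and let $u\in\mathcal{E}\setminus\{0\}$ be a weak solution, i.e. $I_a'(u)=0$. Then $I_a(u)\ge c_a$, where $c_a=\inf_{\gamma\in\Gamma}\max_{t\in[0,1]}I_a(\gamma(t))$ and $\Gamma=\{\gamma\in C([0,1],\mathcal{E}):\gamma(0)=0,\ I_a(\gamma(1))<0\}$.
   Context: $D^{1,2}(\mathbb{R}^3)=\{u\in L^6(\mathbb{R}^3):|\nabla u|\in L^2(\mathbb{R}^3)\}$. $\mathcal{K}_a(x)=\frac{1-e^{-|x|/a}}{|x|}$, $V(f,g)=\int\int\mathcal{K}_a(x-y)f(x)g(y)\,dx\,dy$, $\mathcal{E}=\{u\in D^{1,2}(\mathbb{R}^3):V(u^2,u^2)<\infty\}$ with norm $\|u\|_{\mathcal{E}}=(\|\nabla u\|_2^2+V(u^2,u^2)^{1/2})^{1/2}$, $I_a(u)=\frac12\|\nabla u\|_2^2+\frac{q^2}{4}V(u^2,u^2)-\frac1p\|u\|_p^p$, which is $C^1$ on $\mathcal{E}$ with $I_a'(u)[v]=\int\nabla u\cdot\nabla v+q^2\int\phi_u uv-\int|u|^{p-2}uv$, $\phi_u=\mathcal{K}_a*u^2$. *)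

theory Defs
  imports "HOL-Analysis.Analysis"
begin

type_synonym R3 = "real ^ 3"

definition pd :: "3 \<Rightarrow> (R3 \<Rightarrow> real) \<Rightarrow> R3 \<Rightarrow> real" where
  "pd i f x = frechet_derivative f (at x) (axis i 1)"

definition smooth3 :: "(R3 \<Rightarrow> real) \<Rightarrow> bool" where
  "smooth3 f \<longleftrightarrow> (\<forall>js x. (foldr pd js f) differentiable (at x))"

definition test_fun :: "(R3 \<Rightarrow> real) \<Rightarrow> bool" where
  "test_fun \<phi> \<longleftrightarrow> smooth3 \<phi> \<and> compact (closure {x. \<phi> x \<noteq> 0})"

definition weak_grad :: "(R3 \<Rightarrow> real) \<Rightarrow> (R3 \<Rightarrow> R3) \<Rightarrow> bool" where
  "weak_grad u g \<longleftrightarrow>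
     u \<in> borel_measurable lborel \<and> g \<in> borel_measurable lborel \<and>
     (\<forall>K. compact K \<longrightarrow> set_integrable lborel K u \<and> set_integrable lborel K g) \<and>
     (\<forall>\<phi> i. test_fun \<phi> \<longrightarrow>
        (\<integral>x. u x * pd i \<phi> x \<partial>lborel) = - (\<integral>x. g x $ i * \<phi> x \<partial>lborel))"

definition grad :: "(R3 \<Rightarrow> real) \<Rightarrow> R3 \<Rightarrow> R3" where
  "grad u = (SOME g. weak_grad u g)"

definition D12 :: "(R3 \<Rightarrow> real) set" where
  "D12 = {u. u \<in> borel_measurable lborel \<and> integrable lborel (\<lambda>x. \<bar>u x\<bar> ^ 6) \<and>
             (\<exists>g. weak_grad u g \<and> integrable lborel (\<lambda>x. (norm (g x))\<^sup>2))}"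

definition Ka :: "real \<Rightarrow> R3 \<Rightarrow> real" where
  "Ka a x = (1 - exp (- norm x / a)) / norm x"

text \<open>V(u^2,u^2) as an extended nonnegative real (integrand is nonnegative).\<close>
definition Vnn :: "real \<Rightarrow> (R3 \<Rightarrow> real) \<Rightarrow> ennreal" where
  "Vnn a u = (\<integral>\<^sup>+x. \<integral>\<^sup>+y. ennreal (Ka a (x - y) * (u x)\<^sup>2 * (u y)\<^sup>2) \<partial>lborel \<partial>lborel)"

definition V :: "real \<Rightarrow> (R3 \<Rightarrow> real) \<Rightarrow> real" where
  "V a u = enn2real (Vnn a u)"

definition Espace :: "real \<Rightarrow> (R3 \<Rightarrow> real) set" where
  "Espace a = {u \<in> D12. Vnn a u < \<infinity>}"

definition grad_sq :: "(R3 \<Rightarrow> real) \<Rightarrow> real" where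
  "grad_sq u = (\<integral>x. (norm (grad u x))\<^sup>2 \<partial>lborel)"

definition Enorm :: "real \<Rightarrow> (R3 \<Rightarrow> real) \<Rightarrow> real" where
  "Enorm a u = sqrt (grad_sq u + sqrt (V a u))"

definition Ia :: "real \<Rightarrow> real \<Rightarrow> real \<Rightarrow> (R3 \<Rightarrow> real) \<Rightarrow> real" where
  "Ia a q p u = 1/2 * grad_sq u + q\<^sup>2 / 4 * V a u - 1/p * (\<integral>x. \<bar>u x\<bar> powr p \<partial>lborel)"

definition phi_u :: "real \<Rightarrow> (R3 \<Rightarrow> real) \<Rightarrow> R3 \<Rightarrow> real" where
  "phi_u a u x = (\<integral>y. Ka a (x - y) * (u y)\<^sup>2 \<partial>lborel)"

definition Ia_deriv :: "real \<Rightarrow> real \<Rightarrow> real \<Rightarrow> (R3 \<Rightarrow> real) \<Rightarrow> (R3 \<Rightarrow> real) \<Rightarrow> real" where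
  "Ia_deriv a q p u v =
     (\<integral>x. grad u x \<bullet> grad v x \<partial>lborel) + q\<^sup>2 * (\<integral>x. phi_u a u x * u x * v x \<partial>lborel)
     - (\<integral>x. \<bar>u x\<bar> powr (p - 2) * u x * v x \<partial>lborel)"

definition weak_solution :: "real \<Rightarrow> real \<Rightarrow> real \<Rightarrow> (R3 \<Rightarrow> real) \<Rightarrow> bool" where
  "weak_solution a q p u \<longleftrightarrow> u \<in> Espace a \<and> (\<forall>v \<in> Espace a. Ia_deriv a q p u v = 0)"

definition Epath :: "real \<Rightarrow> (real \<Rightarrow> R3 \<Rightarrow> real) \<Rightarrow> bool" where
  "Epath a \<gamma> \<longleftrightarrow> (\<forall>t\<in>{0..1}. \<gamma> t \<in> Espace a) \<and>
     (\<forall>t\<in>{0..1}. \<forall>e>0. \<exists>d>0. \<forall>s\<in>{0..1}. \<bar>s - t\<bar> < d \<longrightarrow> Enorm a (\<lambda>x. \<gamma> s x - \<gamma> t x) < e)"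

definition Gamma :: "real \<Rightarrow> real \<Rightarrow> real \<Rightarrow> (real \<Rightarrow> R3 \<Rightarrow> real) set" where
  "Gamma a q p = {\<gamma>. Epath a \<gamma> \<and> (AE x in lborel. \<gamma> 0 x = 0) \<and> Ia a q p (\<gamma> 1) < 0}"

definition c_a :: "real \<Rightarrow> real \<Rightarrow> real \<Rightarrow> ereal" where
  "c_a a q p = (INF \<gamma>\<in>Gamma a q p. SUP t\<in>{0..1}. ereal (Ia a q p (\<gamma> t)))"

end

theory Submission
  imports Defs "HOL-Computational_Algebra.Polynomial"
begin

text \<open>
  Along the ray \<open>t \<mapsto> t u\<close> the energy is the fibering map
  \<open>I\<^sub>a(t u) = t\<^sup>2 A / 2 + t\<^sup>4 B / 4 - t\<^sup>p C / p\<close> with \<open>A = \<parallel>\<nabla>u\<parallel>\<^sub>2\<^sup>2\<close>,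
  \<open>B = q\<^sup>2 V(u\<^sup>2,u\<^sup>2)\<close> and \<open>C = \<parallel>u\<parallel>\<^sub>p\<^sup>p\<close>. Testing \<open>I\<^sub>a'(u) = 0\<close> against \<open>u\<close> itself gives
  the Nehari identity \<open>C = A + B\<close>; since \<open>p > 4\<close>, the fibering map on \<open>[0,\<infinity>)\<close> is then
  maximal at \<open>t = 1\<close> and negative at \<open>T = p\<^bsup>1/(p-4)\<^esup>\<close>. Hence the segment
  \<open>t \<mapsto> t T u\<close> lies in \<open>\<Gamma>\<close> and \<open>I\<^sub>a \<le> I\<^sub>a(u)\<close> along it.

  Since \<open>\<nabla>u\<close> is a weak gradient picked by Hilbert's choice operator, the scaling
  \<open>\<parallel>\<nabla>(c u)\<parallel>\<^sub>2\<^sup>2 = c\<^sup>2 \<parallel>\<nabla>u\<parallel>\<^sub>2\<^sup>2\<close> needs uniqueness of weak gradients almost everywhere.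
  It follows by testing against products of one-dimensional smooth bumps built from
  \<open>exp (-1/t)\<close>, which converge to the indicators of boxes.
\<close>

section \<open>The fibering map\<close>

definition fiber :: "real \<Rightarrow> real \<Rightarrow> real \<Rightarrow> real \<Rightarrow> real \<Rightarrow> real" where
  "fiber p A B C s = s\<^sup>2 / 2 * A + s ^ 4 / 4 * B - s powr p / p * C"

lemma powr_minus_one_div_mono:
  fixes r p s :: real
  assumes "0 < r" "r < p" "0 \<le> s"
  shows "(s powr r - 1) / r \<le> (s powr p - 1) / p"
proof (cases "s = 0")
  case True
  then show ?thesis using assms by (simp add: divide_simps)
next
  case False
  then have "0 < s" using assms by simp
  have "s powr r = (s powr p) powr (r / p) * 1 powr (1 - r / p)"
    using assms by (simp add: powr_powr)
  also have "\<dots> \<le> r / p * s powr p + (1 - r / p) * 1"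
    by (rule Youngs_inequality_0) (use assms \<open>0 < s\<close> in auto)
  finally have "p * s powr r \<le> p * (r / p * s powr p + (1 - r / p))"
    using assms by (intro mult_left_mono) auto
  also have "\<dots> = r * s powr p + (p - r)"
    using assms by (simp add: field_simps)
  finally have "p * (s powr r - 1) \<le> r * (s powr p - 1)"
    by (simp add: algebra_simps)
  then show ?thesis
    using assms by (simp add: field_simps)
qed

lemma fiber_le_fiber_one:
  assumes "0 \<le> A" "0 \<le> B" "4 < p" "0 \<le> s"
  shows "fiber p A B (A + B) s \<le> fiber p A B (A + B) 1"
proof -
  have "(s\<^sup>2 - 1) / 2 \<le> (s powr p - 1) / p" "(s ^ 4 - 1) / 4 \<le> (s powr p - 1) / p"
    using powr_minus_one_div_mono[of 2 p s] powr_minus_one_div_mono[of 4 p s] assms by simp_all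
  then have "A * ((s\<^sup>2 - 1) / 2 - (s powr p - 1) / p) \<le> 0"
    and "B * ((s ^ 4 - 1) / 4 - (s powr p - 1) / p) \<le> 0"
    using assms by (simp_all add: mult_nonneg_nonpos)
  moreover have "fiber p A B (A + B) s - fiber p A B (A + B) 1
      = A * ((s\<^sup>2 - 1) / 2 - (s powr p - 1) / p) + B * ((s ^ 4 - 1) / 4 - (s powr p - 1) / p)"
    using assms by (simp add: fiber_def field_simps)
  ultimately show ?thesis by linarith
qed

lemma fiber_neg:
  assumes "0 \<le> A" "0 \<le> B" "0 < A + B" "4 < p"
  shows "fiber p A B (A + B) (p powr (1 / (p - 4))) < 0"
proof -
  define T where "T = p powr (1 / (p - 4))"
  have "1 \<le> T"
    unfolding T_def using assms by (intro ge_one_powr_ge_zero) auto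
  have "T powr p = T powr (p - 4) * T powr 4"
    by (simp flip: powr_add)
  also have "T powr (p - 4) = p"
    unfolding T_def using assms by (simp add: powr_powr)
  finally have "T powr p = p * T ^ 4"
    using \<open>1 \<le> T\<close> by simp
  then have "fiber p A B (A + B) T = T\<^sup>2 / 2 * A - T ^ 4 * A - 3 / 4 * T ^ 4 * B"
    using assms by (simp add: fiber_def field_simps)
  also have "\<dots> \<le> - (T ^ 4 / 2 * (A + B))"
  proof -
    have "A * T\<^sup>2 \<le> A * T ^ 4"
      using \<open>1 \<le> T\<close> assms by (intro mult_left_mono power_increasing) auto
    moreover have "0 \<le> B * T ^ 4"
      using \<open>1 \<le> T\<close> assms by simp
    ultimately show ?thesis by (simp add: field_simps)
  qed
  also have "\<dots> < 0"
    using \<open>1 \<le> T\<close> assms by simp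
  finally show ?thesis
    unfolding T_def .
qed


definition smooth1 :: "(real \<Rightarrow> real) \<Rightarrow> bool" where
  "smooth1 f \<longleftrightarrow> (\<forall>k x. (deriv ^^ k) f differentiable (at x))"

lemma smooth1_differentiable: "smooth1 f \<Longrightarrow> f differentiable (at x)"
  unfolding smooth1_def by (metis funpow_0)

lemma smooth1_deriv: "smooth1 f \<Longrightarrow> smooth1 (deriv f)"
  unfolding smooth1_def by (metis comp_apply funpow_Suc_right)

lemma smooth1_has_real_derivative:
  "smooth1 f \<Longrightarrow> (f has_real_derivative deriv f x) (at x)"
  using DERIV_deriv_iff_real_differentiable smooth1_differentiable by blast

lemma funpow_deriv_add:
  fixes u v :: "real \<Rightarrow> real"
  assumes "\<And>j x. j < k \<Longrightarrow> (deriv ^^ j) u differentiable (at x)"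
    and "\<And>j x. j < k \<Longrightarrow> (deriv ^^ j) v differentiable (at x)"
  shows "(deriv ^^ k) (\<lambda>t. u t + v t) = (\<lambda>t. (deriv ^^ k) u t + (deriv ^^ k) v t)"
  using assms
proof (induction k)
  case 0
  then show ?case by simp
next
  case (Suc k)
  show ?case
  proof
    fix t
    have "((\<lambda>t. (deriv ^^ k) u t + (deriv ^^ k) v t) has_real_derivative
        deriv ((deriv ^^ k) u) t + deriv ((deriv ^^ k) v) t) (at t)"
      using Suc.prems by (intro DERIV_add) (auto simp: DERIV_deriv_iff_real_differentiable)
    then show "(deriv ^^ Suc k) (\<lambda>t. u t + v t) t = (deriv ^^ Suc k) u t + (deriv ^^ Suc k) v t"
      using Suc by (simp add: DERIV_imp_deriv)
  qed
qed

lemma deriv_mult_smooth1: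
  assumes "smooth1 f" "smooth1 h"
  shows "deriv (\<lambda>t. f t * h t) = (\<lambda>t. deriv f t * h t + f t * deriv h t)"
proof
  fix t
  have "((\<lambda>t. f t * h t) has_real_derivative deriv f t * h t + deriv h t * f t) (at t)"
    by (intro DERIV_mult smooth1_has_real_derivative assms)
  then show "deriv (\<lambda>t. f t * h t) t = deriv f t * h t + f t * deriv h t"
    by (simp add: DERIV_imp_deriv mult.commute)
qed

lemma smooth1_mult:
  assumes "smooth1 f" "smooth1 h"
  shows "smooth1 (\<lambda>t. f t * h t)"
  unfolding smooth1_def
proof (intro allI)
  fix k x
  show "(deriv ^^ k) (\<lambda>t. f t * h t) differentiable (at x)"
    using assms
  proof (induction k arbitrary: f h x rule: less_induct)
    case (less k)
    show ?case
    proof (cases k)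
      case 0
      then show ?thesis by (simp add: differentiable_mult smooth1_differentiable less.prems)
    next
      case (Suc m)
      have smooth: "smooth1 (deriv f)" "smooth1 (deriv h)"
        using less.prems smooth1_deriv by auto
      have "(deriv ^^ k) (\<lambda>t. f t * h t) = (deriv ^^ m) (deriv (\<lambda>t. f t * h t))"
        unfolding Suc funpow_Suc_right o_apply ..
      also have "\<dots> = (deriv ^^ m) (\<lambda>t. deriv f t * h t + f t * deriv h t)"
        using deriv_mult_smooth1[OF less.prems] by simp
      also have "\<dots> = (\<lambda>t. (deriv ^^ m) (\<lambda>t. deriv f t * h t) t + (deriv ^^ m) (\<lambda>t. f t * deriv h t) t)"
        by (rule funpow_deriv_add) (use less.IH Suc less.prems smooth in auto)
      finally show ?thesis
        using less.IH Suc less.prems smooth by (auto intro!: differentiable_add)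
    qed
  qed
qed

lemma funpow_deriv_affine_has_real_derivative:
  assumes "smooth1 f"
  shows "((\<lambda>t. c ^ k * (deriv ^^ k) f (c * t + d)) has_real_derivative
      c ^ Suc k * (deriv ^^ Suc k) f (c * t + d)) (at t)"
proof -
  have "(deriv ^^ k) f differentiable (at (c * t + d))"
    using assms unfolding smooth1_def by blast
  then have "((\<lambda>t. c ^ k * (deriv ^^ k) f (c * t + d)) has_real_derivative
      c ^ k * (deriv ((deriv ^^ k) f) (c * t + d) * c)) (at t)"
    by (auto intro!: DERIV_cmult DERIV_chain2[where f = "(deriv ^^ k) f"] derivative_eq_intros
        simp: DERIV_deriv_iff_real_differentiable)
  then show ?thesis
    by (simp add: mult_ac)
qed

lemma funpow_deriv_affine:
  assumes "smooth1 f"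
  shows "(deriv ^^ k) (\<lambda>t. f (c * t + d)) = (\<lambda>t. c ^ k * (deriv ^^ k) f (c * t + d))"
proof (induction k)
  case 0
  then show ?case by simp
next
  case (Suc k)
  then show ?case
    using DERIV_imp_deriv[OF funpow_deriv_affine_has_real_derivative[OF assms]] by auto
qed

lemma smooth1_affine:
  assumes "smooth1 f"
  shows "smooth1 (\<lambda>t. f (c * t + d))"
  unfolding smooth1_def funpow_deriv_affine[OF assms]
  using funpow_deriv_affine_has_real_derivative[OF assms] real_differentiable_def by blast

section \<open>A flat bump function\<close>

text \<open>
  All derivatives of \<open>t \<mapsto> exp (-1/t)\<close> on \<open>t > 0\<close> have the shape
  \<open>P(1/t) exp (-1/t)\<close> with a polynomial \<open>P\<close>; these tend to \<open>0\<close> as \<open>t \<rightarrow> 0\<^sup>+\<close>.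
\<close>

definition poly_flat :: "real poly \<Rightarrow> real \<Rightarrow> real" where
  "poly_flat P t = (if t > 0 then poly P (1 / t) * exp (- (1 / t)) else 0)"

definition flat_deriv :: "real poly \<Rightarrow> real poly" where
  "flat_deriv P = [:0, 0, 1:] * (P - pderiv P)"

lemma poly_times_exp_neg_tendsto_0: "((\<lambda>s. poly P s * exp (- s)) \<longlongrightarrow> (0::real)) at_top"
proof -
  have "((\<lambda>s. \<Sum>i\<le>degree P. coeff P i * (s ^ i / exp s)) \<longlongrightarrow> (\<Sum>i\<le>degree P. coeff P i * 0)) at_top"
    by (intro tendsto_sum tendsto_mult tendsto_const tendsto_power_div_exp_0)
  then show ?thesis
    by (simp add: poly_altdef sum_divide_distrib exp_minus field_simps)
qed

lemma poly_flat_tendsto_0: "((\<lambda>t. poly P (1 / t) * exp (- (1 / t))) \<longlongrightarrow> (0::real)) (at_right 0)"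
  using filterlim_compose[OF poly_times_exp_neg_tendsto_0 filterlim_inverse_at_top_right]
  by (simp add: inverse_eq_divide)

lemma poly_flat_has_real_derivative_0: "(poly_flat P has_real_derivative 0) (at 0)"
proof -
  have "((\<lambda>y. (poly_flat P y - poly_flat P 0) / (y - 0)) \<longlongrightarrow> 0) (at_left 0)"
  proof (rule Lim_transform_eventually[OF tendsto_const])
    show "\<forall>\<^sub>F y in at_left 0. 0 = (poly_flat P y - poly_flat P 0) / (y - 0)"
      unfolding eventually_at_left_field by (auto simp: poly_flat_def intro!: exI[of _ "-1"])
  qed
  moreover have "((\<lambda>y. (poly_flat P y - poly_flat P 0) / (y - 0)) \<longlongrightarrow> 0) (at_right 0)"
  proof (rule Lim_transform_eventually[OF poly_flat_tendsto_0])
    show "\<forall>\<^sub>F y in at_right 0. poly (pCons 0 P) (1 / y) * exp (- (1 / y))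
        = (poly_flat P y - poly_flat P 0) / (y - 0)"
      unfolding eventually_at_right_field by (auto simp: poly_flat_def intro!: exI[of _ 1])
  qed
  ultimately show ?thesis
    unfolding has_field_derivative_iff by (simp add: filterlim_at_split)
qed

lemma poly_flat_has_real_derivative: "(poly_flat P has_real_derivative poly_flat (flat_deriv P) t) (at t)"
proof -
  consider "t > 0" | "t < 0" | "t = 0" by linarith
  then show ?thesis
  proof cases
    case 1
    have "((\<lambda>t. poly P (1 / t) * exp (- (1 / t))) has_real_derivative
        poly (pderiv P) (1 / t) * (- (1 / t\<^sup>2)) * exp (- (1 / t)) + exp (- (1 / t)) * (1 / t\<^sup>2) * poly P (1 / t)) (at t)"
      using 1 by (auto intro!: derivative_eq_intros DERIV_chain2[OF poly_DERIV] simp: power2_eq_square)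
    moreover have "poly (pderiv P) (1 / t) * (- (1 / t\<^sup>2)) * exp (- (1 / t)) + exp (- (1 / t)) * (1 / t\<^sup>2) * poly P (1 / t)
        = poly_flat (flat_deriv P) t"
      using 1 by (simp add: poly_flat_def flat_deriv_def algebra_simps power2_eq_square)
    ultimately have "((\<lambda>t. poly P (1 / t) * exp (- (1 / t))) has_real_derivative
        poly_flat (flat_deriv P) t) (at t)"
      by simp
    then show ?thesis
      by (rule has_field_derivative_transform_within_open[of _ _ _ "{0<..}"])
        (use 1 in \<open>auto simp: poly_flat_def\<close>)
  next
    case 2
    have "((\<lambda>_. 0) has_real_derivative 0) (at t)" by simp
    then have "(poly_flat P has_real_derivative 0) (at t)"
      by (rule has_field_derivative_transform_within_open[of _ _ _ "{..<0}"])
        (use 2 in \<open>auto simp: poly_flat_def\<close>)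
    then show ?thesis
      using 2 by (simp add: poly_flat_def)
  next
    case 3
    then show ?thesis
      using poly_flat_has_real_derivative_0 by (simp add: poly_flat_def)
  qed
qed

lemma funpow_deriv_poly_flat: "(deriv ^^ k) (poly_flat P) = poly_flat ((flat_deriv ^^ k) P)"
  by (induction k) (auto simp: DERIV_imp_deriv[OF poly_flat_has_real_derivative])

lemma smooth1_poly_flat: "smooth1 (poly_flat P)"
  unfolding smooth1_def funpow_deriv_poly_flat
  using poly_flat_has_real_derivative real_differentiable_def by blast

definition flat :: "real \<Rightarrow> real" where
  "flat t = (if t > 0 then exp (- (1 / t)) else 0)"

definition bump :: "real \<Rightarrow> real \<Rightarrow> real \<Rightarrow> real \<Rightarrow> real" where
  "bump N a b t = flat (N * (t - a)) * flat (N * (b - t))"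

lemma smooth1_flat: "smooth1 flat"
proof -
  have "flat = poly_flat 1"
    by (simp add: fun_eq_iff flat_def poly_flat_def)
  then show ?thesis
    by (metis smooth1_poly_flat)
qed

lemma smooth1_bump: "smooth1 (bump N a b)"
proof -
  have "smooth1 (\<lambda>t. flat (N * t + (- N * a)) * flat ((- N) * t + N * b))"
    by (intro smooth1_mult smooth1_affine smooth1_flat)
  then show ?thesis
    by (simp add: bump_def[abs_def] algebra_simps)
qed

lemma bump_nonneg: "0 \<le> bump N a b t"
  and bump_le_one: "bump N a b t \<le> 1"
  unfolding bump_def flat_def by (auto intro: mult_le_one)

lemma bump_nonzero_imp:
  assumes "0 < N" "bump N a b t \<noteq> 0"
  shows "a < t" "t < b"
proof -
  have "0 < N * (t - a)" "0 < N * (b - t)"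
    using assms(2) by (auto simp: bump_def flat_def split: if_splits)
  then show "a < t" "t < b"
    using assms(1) by (auto simp: zero_less_mult_iff)
qed

lemma flat_tendsto_1: "0 < c \<Longrightarrow> (\<lambda>n. flat (real (Suc n) * c)) \<longlonglongrightarrow> 1"
proof -
  assume "0 < c"
  have "(\<lambda>n. exp (- (inverse (real (Suc n)) * (1 / c)))) \<longlonglongrightarrow> exp (- (0 * (1 / c)))"
    by (intro tendsto_exp tendsto_minus tendsto_mult LIMSEQ_inverse_real_of_nat tendsto_const)
  moreover have "flat (real (Suc n) * c) = exp (- (inverse (real (Suc n)) * (1 / c)))" for n
    using \<open>0 < c\<close> by (auto simp: flat_def field_simps intro!: add_pos_nonneg)
  ultimately show ?thesis by simp
qed

lemma bump_tendsto_indicator: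
  "(\<lambda>n. bump (real (Suc n)) a b t) \<longlonglongrightarrow> (if a < t \<and> t < b then 1 else 0)"
proof (cases "a < t \<and> t < b")
  case True
  then have "(\<lambda>n. flat (real (Suc n) * (t - a)) * flat (real (Suc n) * (b - t))) \<longlonglongrightarrow> 1 * 1"
    by (intro tendsto_mult flat_tendsto_1) auto
  then show ?thesis
    using True by (simp add: bump_def)
next
  case False
  then have "bump (real (Suc n)) a b t = 0" for n
    using bump_nonzero_imp[of "real (Suc n)" a b t] by auto
  then show ?thesis
    using False by auto
qed

lemma continuous_on_bump: "continuous_on UNIV (bump N a b)"
  using smooth1_differentiable[OF smooth1_bump]
  by (simp add: continuous_at_imp_continuous_on differentiable_imp_continuous_within)


definition tensor3 :: "(real \<Rightarrow> real) \<Rightarrow> (real \<Rightarrow> real) \<Rightarrow> (real \<Rightarrow> real) \<Rightarrow> R3 \<Rightarrow> real" where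
  "tensor3 f g h x = f (x $ 1) * g (x $ 2) * h (x $ 3)"

lemma has_derivative_vec_nth_comp:
  assumes "smooth1 \<psi>"
  shows "((\<lambda>x::R3. \<psi> (x $ i)) has_derivative (\<lambda>v. deriv \<psi> (x $ i) * v $ i)) (at x)"
proof -
  have "(\<psi> has_derivative (\<lambda>h. deriv \<psi> (x $ i) * h)) (at (x $ i))"
    using smooth1_has_real_derivative[OF assms] by (simp add: has_field_derivative_def)
  moreover have "((\<lambda>x::R3. x $ i) has_derivative (\<lambda>v. v $ i)) (at x)"
    by (rule bounded_linear_imp_has_derivative[OF bounded_linear_vec_nth])
  ultimately show ?thesis
    using has_derivative_compose by fastforce
qed

lemma tensor3_has_derivative:
  assumes "smooth1 f" "smooth1 g" "smooth1 h"
  shows "(tensor3 f g h has_derivative (\<lambda>v. deriv f (x $ 1) * v $ 1 * g (x $ 2) * h (x $ 3)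
     + f (x $ 1) * (deriv g (x $ 2) * v $ 2) * h (x $ 3) + f (x $ 1) * g (x $ 2) * (deriv h (x $ 3) * v $ 3))) (at x)"
proof -
  have "((\<lambda>x. f (x $ 1) * g (x $ 2) * h (x $ 3)) has_derivative
     (\<lambda>v. f (x $ 1) * g (x $ 2) * (deriv h (x $ 3) * v $ 3)
        + (f (x $ 1) * (deriv g (x $ 2) * v $ 2) + deriv f (x $ 1) * v $ 1 * g (x $ 2)) * h (x $ 3))) (at x)"
    by (intro has_derivative_mult has_derivative_vec_nth_comp assms)
  then show ?thesis
    unfolding tensor3_def[abs_def] by (rule has_derivative_eq_rhs) (auto simp: algebra_simps)
qed

lemma pd_tensor3:
  assumes "smooth1 f" "smooth1 g" "smooth1 h"
  shows "pd 1 (tensor3 f g h) = tensor3 (deriv f) g h"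
    and "pd 2 (tensor3 f g h) = tensor3 f (deriv g) h"
    and "pd 3 (tensor3 f g h) = tensor3 f g (deriv h)"
  unfolding pd_def frechet_derivative_at[OF tensor3_has_derivative[OF assms], symmetric]
  by (auto simp: fun_eq_iff axis_def tensor3_def)

lemma foldr_pd_tensor3:
  assumes "smooth1 f" "smooth1 g" "smooth1 h"
  shows "\<exists>f' g' h'. smooth1 f' \<and> smooth1 g' \<and> smooth1 h' \<and> foldr pd js (tensor3 f g h) = tensor3 f' g' h'"
proof (induction js)
  case Nil
  then show ?case using assms by auto
next
  case (Cons i js)
  then obtain f' g' h' where smooth: "smooth1 f'" "smooth1 g'" "smooth1 h'"
    and eq: "foldr pd js (tensor3 f g h) = tensor3 f' g' h'"
    by blast
  consider "i = 1" | "i = 2" | "i = 3"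
    using exhaust_3 by blast
  then show ?case
    by cases (use smooth eq pd_tensor3[OF smooth] smooth1_deriv in auto)
qed

lemma test_fun_tensor3:
  assumes "smooth1 f" "smooth1 g" "smooth1 h" and supp: "\<And>x. tensor3 f g h x \<noteq> 0 \<Longrightarrow> x \<in> cbox a b"
  shows "test_fun (tensor3 f g h)"
  unfolding test_fun_def
proof
  show "smooth3 (tensor3 f g h)"
    unfolding smooth3_def
  proof (intro allI)
    fix js x
    obtain f' g' h' where smooth: "smooth1 f'" "smooth1 g'" "smooth1 h'"
      and eq: "foldr pd js (tensor3 f g h) = tensor3 f' g' h'"
      using foldr_pd_tensor3[OF assms(1-3)] by blast
    show "foldr pd js (tensor3 f g h) differentiable (at x)"
      unfolding eq using tensor3_has_derivative[OF smooth] differentiableI by blast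
  qed
  have "closure {x. tensor3 f g h x \<noteq> 0} \<subseteq> cbox a b"
    by (rule closure_minimal) (use supp in auto)
  then show "compact (closure {x. tensor3 f g h x \<noteq> 0})"
    by (meson bounded_cbox bounded_subset closed_closure compact_eq_bounded_closed)
qed

definition box_bump :: "nat \<Rightarrow> R3 \<Rightarrow> R3 \<Rightarrow> R3 \<Rightarrow> real" where
  "box_bump n a b = tensor3 (bump (Suc n) (a $ 1) (b $ 1)) (bump (Suc n) (a $ 2) (b $ 2))
     (bump (Suc n) (a $ 3) (b $ 3))"

lemma box_bump_nonzero_imp: "box_bump n a b x \<noteq> 0 \<Longrightarrow> x \<in> box a b"
  using bump_nonzero_imp[of "real (Suc n)"]
  by (auto simp: box_bump_def tensor3_def mem_box_cart forall_3)

lemma test_fun_box_bump: "test_fun (box_bump n a b)"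
proof -
  have "box_bump n a b x \<noteq> 0 \<Longrightarrow> x \<in> cbox a b" for x
    using box_bump_nonzero_imp box_subset_cbox by blast
  then show ?thesis
    unfolding box_bump_def by (rule test_fun_tensor3[OF smooth1_bump smooth1_bump smooth1_bump])
qed

lemma box_bump_nonneg: "0 \<le> box_bump n a b x"
  and box_bump_le_one: "box_bump n a b x \<le> 1"
  unfolding box_bump_def tensor3_def
  using bump_nonneg bump_le_one by (auto intro!: mult_le_one)

lemma borel_measurable_box_bump[measurable]: "box_bump n a b \<in> borel_measurable lborel"
proof -
  have "continuous_on UNIV (box_bump n a b)"
    unfolding box_bump_def tensor3_def[abs_def]
    by (intro continuous_intros continuous_on_compose2[OF continuous_on_bump]
        linear_continuous_on bounded_linear_vec_nth) auto
  then show ?thesis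
    by (simp add: borel_measurable_continuous_onI)
qed

lemma box_bump_tendsto_indicator: "(\<lambda>n. box_bump n a b x) \<longlonglongrightarrow> indicator (box a b) x"
proof -
  have "(\<lambda>n. box_bump n a b x) \<longlonglongrightarrow> (if a $ 1 < x $ 1 \<and> x $ 1 < b $ 1 then 1 else 0)
      * (if a $ 2 < x $ 2 \<and> x $ 2 < b $ 2 then 1 else 0) * (if a $ 3 < x $ 3 \<and> x $ 3 < b $ 3 then 1 else 0)"
    unfolding box_bump_def tensor3_def by (intro tendsto_mult bump_tendsto_indicator)
  moreover have "x \<in> box a b \<longleftrightarrow>
      (a $ 1 < x $ 1 \<and> x $ 1 < b $ 1) \<and> (a $ 2 < x $ 2 \<and> x $ 2 < b $ 2) \<and> (a $ 3 < x $ 3 \<and> x $ 3 < b $ 3)"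
    unfolding mem_box_cart forall_3 by blast
  then have "(if a $ 1 < x $ 1 \<and> x $ 1 < b $ 1 then 1 else 0) * (if a $ 2 < x $ 2 \<and> x $ 2 < b $ 2 then 1 else 0)
      * (if a $ 3 < x $ 3 \<and> x $ 3 < b $ 3 then 1 else 0) = (indicator (box a b) x :: real)"
    by (auto simp: indicator_def)
  ultimately show ?thesis
    by simp
qed

section \<open>Uniqueness of weak gradients\<close>

lemma emeasure_density_integrable:
  fixes f :: "'a \<Rightarrow> real"
  assumes f: "integrable M f" "\<And>x. 0 \<le> f x" and X: "X \<in> sets M"
  shows "emeasure (density M (\<lambda>x. ennreal (f x))) X = ennreal (\<integral>x. indicator X x * f x \<partial>M)"
proof -
  have [measurable]: "f \<in> borel_measurable M"
    using f by auto
  have "emeasure (density M (\<lambda>x. ennreal (f x))) X = (\<integral>\<^sup>+x. ennreal (indicator X x * f x) \<partial>M)"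
    using X by (subst emeasure_density) (auto intro!: nn_integral_cong simp: indicator_def)
  also have "\<dots> = ennreal (\<integral>x. indicator X x * f x \<partial>M)"
    using integrable_real_mult_indicator[OF X f(1)] f(2)
    by (intro nn_integral_eq_integral) (auto simp: mult.commute)
  finally show ?thesis .
qed

lemma AE_zero_if_integrable_box_integrals_zero:
  fixes h :: "'a::euclidean_space \<Rightarrow> real"
  assumes "integrable lborel h"
    and box_zero: "\<And>a b. (\<integral>x. indicator (box a b) x * h x \<partial>lborel) = 0"
  shows "AE x in lborel. h x = 0"
proof -
  have [measurable]: "h \<in> borel_measurable lborel"
    using assms by auto
  have int: "integrable lborel (\<lambda>x. max 0 (h x))" "integrable lborel (\<lambda>x. max 0 (- h x))"
    using assms by auto
  have "density lborel (\<lambda>x. ennreal (max 0 (h x))) = density lborel (\<lambda>x. ennreal (max 0 (- h x)))"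
  proof (rule measure_eqI_generator_eq)
    let ?E = "range (\<lambda>(a, b). box a b::'a set)"
    show "Int_stable ?E"
      by (auto simp: Int_stable_def box_Int_box)
    show "?E \<subseteq> Pow UNIV" "sets (density lborel (\<lambda>x. ennreal (max 0 (h x)))) = sigma_sets UNIV ?E"
      "sets (density lborel (\<lambda>x. ennreal (max 0 (- h x)))) = sigma_sets UNIV ?E"
      by (simp_all add: borel_eq_box)
    let ?A = "\<lambda>n::nat. box (- (real n *\<^sub>R One)) (real n *\<^sub>R One) :: 'a set"
    show "range ?A \<subseteq> ?E" "(\<Union>i. ?A i) = UNIV"
      unfolding UN_box_eq_UNIV by auto
    show "emeasure (density lborel (\<lambda>x. ennreal (max 0 (h x)))) (?A i) \<noteq> \<infinity>" for i
      using emeasure_density_integrable[OF int(1)] by simp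
    show "emeasure (density lborel (\<lambda>x. ennreal (max 0 (h x)))) X
        = emeasure (density lborel (\<lambda>x. ennreal (max 0 (- h x)))) X" if "X \<in> ?E" for X
    proof -
      have X: "X \<in> sets lborel"
        using that by auto
      have ints: "integrable lborel (\<lambda>x. indicator X x * max 0 (h x))"
        "integrable lborel (\<lambda>x. indicator X x * max 0 (- h x))"
        using integrable_real_mult_indicator[OF X int(1)] integrable_real_mult_indicator[OF X int(2)]
        by (simp_all add: mult.commute)
      have "(\<integral>x. indicator X x * max 0 (h x) \<partial>lborel) - (\<integral>x. indicator X x * max 0 (- h x) \<partial>lborel)
          = (\<integral>x. indicator X x * h x \<partial>lborel)"
        by (subst Bochner_Integration.integral_diff[symmetric, OF ints])
          (auto intro!: Bochner_Integration.integral_cong simp: indicator_def)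
      also have "\<dots> = 0"
        using that box_zero by auto
      finally show ?thesis
        using that emeasure_density_integrable[OF int(1)] emeasure_density_integrable[OF int(2)] by auto
    qed
  qed
  then have "AE x in lborel. ennreal (max 0 (h x)) = ennreal (max 0 (- h x))"
    by (intro sigma_finite_measure.density_unique[OF sigma_finite_lborel]) auto
  then show ?thesis
    by eventually_elim (auto simp: max_def split: if_splits)
qed

lemma integrable_box_if_integrable_cbox:
  fixes h :: "'a::euclidean_space \<Rightarrow> real"
  assumes "integrable lborel (\<lambda>x. indicator (cbox a b) x * h x)"
  shows "integrable lborel (\<lambda>x. indicator (box a b) x * h x)"
proof -
  have "integrable lborel (\<lambda>x. (indicator (cbox a b) x * h x) * indicator (box a b) x)"
    by (intro integrable_real_mult_indicator assms) auto
  moreover have "(\<lambda>x. (indicator (cbox a b) x * h x) * indicator (box a b) x) = (\<lambda>x. indicator (box a b) x * h x)"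
    using box_subset_cbox[of a b] by (auto simp: indicator_def fun_eq_iff)
  ultimately show ?thesis by simp
qed

lemma AE_zero_if_box_integrals_zero:
  fixes h :: "'a::euclidean_space \<Rightarrow> real"
  assumes loc: "\<And>a b. integrable lborel (\<lambda>x. indicator (cbox a b) x * h x)"
    and box_zero: "\<And>a b. (\<integral>x. indicator (box a b) x * h x \<partial>lborel) = 0"
  shows "AE x in lborel. h x = 0"
proof -
  define B where "B n = box (- (real n *\<^sub>R One)) (real n *\<^sub>R One :: 'a)" for n :: nat
  have "AE x in lborel. indicator (B n) x * h x = 0" for n
  proof (rule AE_zero_if_integrable_box_integrals_zero)
    show "integrable lborel (\<lambda>x. indicator (B n) x * h x)"
      unfolding B_def by (rule integrable_box_if_integrable_cbox[OF loc])
    fix a b :: 'a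
    obtain c d where cd: "box a b \<inter> B n = box c d"
      unfolding B_def using box_Int_box by blast
    have "(\<integral>x. indicator (box a b) x * (indicator (B n) x * h x) \<partial>lborel)
        = (\<integral>x. indicator (box c d) x * h x \<partial>lborel)"
      by (rule Bochner_Integration.integral_cong) (auto simp: indicator_def simp flip: cd)
    then show "(\<integral>x. indicator (box a b) x * (indicator (B n) x * h x) \<partial>lborel) = 0"
      using box_zero by simp
  qed
  then have "AE x in lborel. \<forall>n. indicator (B n) x * h x = 0"
    unfolding AE_all_countable ..
  then show ?thesis
  proof eventually_elim
    fix x
    assume "\<forall>n. indicator (B n) x * h x = 0"
    moreover obtain n where "x \<in> B n"
      using UN_box_eq_UNIV unfolding B_def by blast
    ultimately show "h x = 0"
      by (metis indicator_simps(1) mult_1)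
  qed
qed

lemma integrable_indicator_compact_weak_grad:
  assumes "weak_grad u g" "compact K"
  shows "integrable lborel (\<lambda>x. indicator K x * g x $ i)"
proof -
  have "set_integrable lborel K g"
    using assms unfolding weak_grad_def by blast
  then have "integrable lborel (\<lambda>x. (indicator K x *\<^sub>R g x) $ i)"
    unfolding set_integrable_def by (rule integrable_bounded_linear[OF bounded_linear_vec_nth])
  then show ?thesis by simp
qed

lemma borel_measurable_weak_grad_nth:
  "weak_grad u g \<Longrightarrow> (\<lambda>x. g x $ i) \<in> borel_measurable lborel"
  unfolding weak_grad_def
  using measurable_compose[OF _ borel_measurable_continuous_onI[OF linear_continuous_on[OF bounded_linear_vec_nth]]]
  by blast

lemma tendsto_integral_box_bump:
  assumes "weak_grad u g"
  shows "(\<lambda>n. \<integral>x. g x $ i * box_bump n a b x \<partial>lborel) \<longlonglongrightarrow> (\<integral>x. indicator (box a b) x * g x $ i \<partial>lborel)"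
proof (rule integral_dominated_convergence[where w = "\<lambda>x. \<bar>indicator (cbox a b) x * g x $ i\<bar>"])
  have [measurable]: "(\<lambda>x. g x $ i) \<in> borel_measurable lborel"
    using borel_measurable_weak_grad_nth[OF assms] .
  show "(\<lambda>x. indicator (box a b) x * g x $ i) \<in> borel_measurable lborel"
    by measurable
  show "(\<lambda>x. g x $ i * box_bump n a b x) \<in> borel_measurable lborel" for n
    by measurable
  show "integrable lborel (\<lambda>x. \<bar>indicator (cbox a b) x * g x $ i\<bar>)"
    by (intro integrable_abs integrable_indicator_compact_weak_grad[OF assms] compact_cbox)
  show "AE x in lborel. (\<lambda>n. g x $ i * box_bump n a b x) \<longlonglongrightarrow> indicator (box a b) x * g x $ i"
    by (intro AE_I2) (simp add: tendsto_mult_left box_bump_tendsto_indicator mult.commute)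
  show "AE x in lborel. norm (g x $ i * box_bump n a b x) \<le> \<bar>indicator (cbox a b) x * g x $ i\<bar>" for n
  proof (intro AE_I2)
    fix x
    show "norm (g x $ i * box_bump n a b x) \<le> \<bar>indicator (cbox a b) x * g x $ i\<bar>"
    proof (cases "box_bump n a b x = 0")
      case False
      then have "x \<in> cbox a b"
        using box_bump_nonzero_imp box_subset_cbox by blast
      then show ?thesis
        using box_bump_nonneg[of n a b x] box_bump_le_one[of n a b x]
        by (auto simp: abs_mult intro: mult_left_le)
    qed simp
  qed
qed

lemma weak_grad_integral_by_parts:
  assumes "weak_grad u g" "test_fun \<phi>"
  shows "(\<integral>x. u x * pd i \<phi> x \<partial>lborel) = - (\<integral>x. g x $ i * \<phi> x \<partial>lborel)"
  using assms unfolding weak_grad_def by blast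

lemma weak_grad_box_integral_eq:
  assumes "weak_grad u g1" "weak_grad u g2"
  shows "(\<integral>x. indicator (box a b) x * g1 x $ i \<partial>lborel) = (\<integral>x. indicator (box a b) x * g2 x $ i \<partial>lborel)"
proof -
  have "(\<integral>x. g1 x $ i * box_bump n a b x \<partial>lborel) = (\<integral>x. g2 x $ i * box_bump n a b x \<partial>lborel)" for n
  proof -
    have "(\<integral>x. u x * pd i (box_bump n a b) x \<partial>lborel) = - (\<integral>x. g1 x $ i * box_bump n a b x \<partial>lborel)"
      "(\<integral>x. u x * pd i (box_bump n a b) x \<partial>lborel) = - (\<integral>x. g2 x $ i * box_bump n a b x \<partial>lborel)"
      by (rule weak_grad_integral_by_parts[OF assms(1) test_fun_box_bump],
          rule weak_grad_integral_by_parts[OF assms(2) test_fun_box_bump])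
    then show ?thesis by simp
  qed
  then have "(\<lambda>n. \<integral>x. g2 x $ i * box_bump n a b x \<partial>lborel) \<longlonglongrightarrow> (\<integral>x. indicator (box a b) x * g1 x $ i \<partial>lborel)"
    using tendsto_integral_box_bump[OF assms(1), of i a b] by simp
  then show ?thesis
    using tendsto_integral_box_bump[OF assms(2)] by (rule LIMSEQ_unique)
qed

lemma weak_grad_unique:
  assumes g1: "weak_grad u g1" and g2: "weak_grad u g2"
  shows "AE x in lborel. g1 x = g2 x"
proof -
  have "AE x in lborel. g1 x $ i - g2 x $ i = 0" for i
  proof (rule AE_zero_if_box_integrals_zero)
    have int: "integrable lborel (\<lambda>x. indicator (cbox a b) x * g1 x $ i)"
      "integrable lborel (\<lambda>x. indicator (cbox a b) x * g2 x $ i)" for a b :: R3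
      by (intro integrable_indicator_compact_weak_grad[OF g1] integrable_indicator_compact_weak_grad[OF g2]
          compact_cbox)+
    show "integrable lborel (\<lambda>x. indicator (cbox a b) x * (g1 x $ i - g2 x $ i))" for a b
      using Bochner_Integration.integrable_diff[OF int[of a b]] by (simp add: algebra_simps)
    have "integrable lborel (\<lambda>x. indicator (box a b) x * g1 x $ i)"
      "integrable lborel (\<lambda>x. indicator (box a b) x * g2 x $ i)" for a b :: R3
      by (intro integrable_box_if_integrable_cbox int)+
    then show "(\<integral>x. indicator (box a b) x * (g1 x $ i - g2 x $ i) \<partial>lborel) = 0" for a b
      using weak_grad_box_integral_eq[OF g1 g2, of a b i] Bochner_Integration.integral_diff
      by (simp add: algebra_simps)
  qed
  then have "AE x in lborel. \<forall>i. g1 x $ i = g2 x $ i"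
    by (simp add: AE_all_countable)
  then show ?thesis
    by eventually_elim (simp add: vec_eq_iff)
qed


lemma Ka_nonneg: "0 < a \<Longrightarrow> 0 \<le> Ka a x"
  unfolding Ka_def by (auto intro!: divide_nonneg_nonneg)

lemma Ka_pos: "0 < a \<Longrightarrow> x \<noteq> 0 \<Longrightarrow> 0 < Ka a x"
  unfolding Ka_def by (auto intro!: divide_pos_pos)

lemma borel_measurable_Ka[measurable]: "Ka a \<in> borel_measurable borel"
  unfolding Ka_def[abs_def] by measurable

lemma borel_measurable_Vnn_integrand:
  assumes [measurable]: "u \<in> borel_measurable lborel"
  shows "(\<lambda>x. \<integral>\<^sup>+y. ennreal (Ka a (x - y) * (u x)\<^sup>2 * (u y)\<^sup>2) \<partial>lborel) \<in> borel_measurable lborel"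
proof -
  have "(\<lambda>(x::R3, y::R3). ennreal (Ka a (x - y) * (u x)\<^sup>2 * (u y)\<^sup>2)) \<in> borel_measurable (lborel \<Otimes>\<^sub>M lborel)"
    by measurable
  then show ?thesis
    using sigma_finite_measure.borel_measurable_nn_integral[OF sigma_finite_lborel] by simp
qed

lemma Vnn_scale:
  assumes a: "0 < a" and [measurable]: "u \<in> borel_measurable lborel"
  shows "Vnn a (\<lambda>x. c * u x) = ennreal (c ^ 4) * Vnn a u"
proof -
  have "(\<integral>\<^sup>+y. ennreal (Ka a (x - y) * (c * u x)\<^sup>2 * (c * u y)\<^sup>2) \<partial>lborel)
      = ennreal (c ^ 4) * (\<integral>\<^sup>+y. ennreal (Ka a (x - y) * (u x)\<^sup>2 * (u y)\<^sup>2) \<partial>lborel)" for x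
  proof -
    have "(\<integral>\<^sup>+y. ennreal (Ka a (x - y) * (c * u x)\<^sup>2 * (c * u y)\<^sup>2) \<partial>lborel)
        = (\<integral>\<^sup>+y. ennreal (c ^ 4) * ennreal (Ka a (x - y) * (u x)\<^sup>2 * (u y)\<^sup>2) \<partial>lborel)"
      by (intro nn_integral_cong)
        (auto simp: Ka_nonneg[OF a] power_mult_distrib algebra_simps simp flip: ennreal_mult)
    also have "\<dots> = ennreal (c ^ 4) * (\<integral>\<^sup>+y. ennreal (Ka a (x - y) * (u x)\<^sup>2 * (u y)\<^sup>2) \<partial>lborel)"
      by (rule nn_integral_cmult) measurable
    finally show ?thesis .
  qed
  then have "Vnn a (\<lambda>x. c * u x)
      = (\<integral>\<^sup>+x. ennreal (c ^ 4) * (\<integral>\<^sup>+y. ennreal (Ka a (x - y) * (u x)\<^sup>2 * (u y)\<^sup>2) \<partial>lborel) \<partial>lborel)"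
    unfolding Vnn_def by simp
  also have "\<dots> = ennreal (c ^ 4) * Vnn a u"
    unfolding Vnn_def by (rule nn_integral_cmult[OF borel_measurable_Vnn_integrand]) simp
  finally show ?thesis .
qed

lemma V_scale:
  assumes "0 < a" "u \<in> borel_measurable lborel"
  shows "V a (\<lambda>x. c * u x) = c ^ 4 * V a u"
  unfolding V_def Vnn_scale[OF assms] by (simp add: enn2real_mult)

lemma integral_phi_u_mult_sq:
  assumes a: "0 < a" and [measurable]: "u \<in> borel_measurable lborel" and fin: "Vnn a u < \<infinity>"
  shows "(\<integral>x. phi_u a u x * u x * u x \<partial>lborel) = V a u"
proof -
  define F where "F x = (\<integral>\<^sup>+y. ennreal (Ka a (x - y) * (u x)\<^sup>2 * (u y)\<^sup>2) \<partial>lborel)" for x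
  have [measurable]: "F \<in> borel_measurable lborel"
    unfolding F_def[abs_def] by (rule borel_measurable_Vnn_integrand) simp
  have "phi_u a u x * u x * u x = enn2real (F x)" for x
  proof -
    have "phi_u a u x = enn2real (\<integral>\<^sup>+y. ennreal (Ka a (x - y) * (u y)\<^sup>2) \<partial>lborel)"
      unfolding phi_u_def by (rule integral_eq_nn_integral) (auto simp: Ka_nonneg[OF a])
    moreover have "F x = ennreal ((u x)\<^sup>2) * (\<integral>\<^sup>+y. ennreal (Ka a (x - y) * (u y)\<^sup>2) \<partial>lborel)"
      unfolding F_def
      by (subst nn_integral_cmult[symmetric], measurable)
        (auto intro!: nn_integral_cong simp: Ka_nonneg[OF a] mult_ac simp flip: ennreal_mult)
    ultimately show ?thesis
      by (simp add: enn2real_mult power2_eq_square mult_ac)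
  qed
  then have "(\<integral>x. phi_u a u x * u x * u x \<partial>lborel) = enn2real (\<integral>\<^sup>+x. ennreal (enn2real (F x)) \<partial>lborel)"
    by (simp add: integral_eq_nn_integral)
  also have "(\<integral>\<^sup>+x. ennreal (enn2real (F x)) \<partial>lborel) = (\<integral>\<^sup>+x. F x \<partial>lborel)"
  proof (rule nn_integral_cong_AE)
    have "AE x in lborel. F x \<noteq> \<infinity>"
      by (rule nn_integral_PInf_AE) (use fin in \<open>simp_all add: F_def Vnn_def\<close>)
    then show "AE x in lborel. ennreal (enn2real (F x)) = F x"
      by eventually_elim (auto simp: less_top)
  qed
  finally show ?thesis
    by (simp add: V_def Vnn_def F_def)
qed

lemma AE_zero_if_Vnn_eq_0:
  assumes a: "0 < a" and [measurable]: "u \<in> borel_measurable lborel" and "Vnn a u = 0"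
  shows "AE x in lborel. u x = 0"
proof -
  define F where "F x = (\<integral>\<^sup>+y. ennreal (Ka a (x - y) * (u x)\<^sup>2 * (u y)\<^sup>2) \<partial>lborel)" for x
  have [measurable]: "F \<in> borel_measurable lborel"
    unfolding F_def[abs_def] by (rule borel_measurable_Vnn_integrand) simp
  have F0: "AE x in lborel. F x = 0"
    using \<open>Vnn a u = 0\<close> by (simp add: Vnn_def F_def[abs_def] nn_integral_0_iff_AE)
  show ?thesis
  proof (cases "\<exists>x0. F x0 = 0 \<and> u x0 \<noteq> 0")
    case True
    then obtain x0 where x0: "F x0 = 0" "u x0 \<noteq> 0"
      by blast
    have "AE y in lborel. ennreal (Ka a (x0 - y) * (u x0)\<^sup>2 * (u y)\<^sup>2) = 0"
      using x0(1) by (simp add: F_def nn_integral_0_iff_AE)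
    then show ?thesis
      using AE_lborel_singleton[of x0]
    proof eventually_elim
      fix y
      assume "ennreal (Ka a (x0 - y) * (u x0)\<^sup>2 * (u y)\<^sup>2) = 0" and "y \<noteq> x0"
      then have "Ka a (x0 - y) * (u x0)\<^sup>2 * (u y)\<^sup>2 \<le> 0" and "0 < Ka a (x0 - y)"
        using Ka_pos[OF a] ennreal_eq_0_iff by auto
      then show "u y = 0"
        using x0(2) by (metis mult_pos_pos not_less power2_eq_square zero_less_power2)
    qed
  next
    case False
    with F0 show ?thesis
      by (auto elim: AE_mp)
  qed
qed

lemma V_pos:
  assumes a: "0 < a" and u: "u \<in> Espace a" and nz: "\<not> (AE x in lborel. u x = 0)"
  shows "0 < V a u"
proof -
  have "u \<in> borel_measurable lborel" and fin: "Vnn a u < \<infinity>"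
    using u unfolding Espace_def D12_def by auto
  then have "Vnn a u \<noteq> 0"
    using AE_zero_if_Vnn_eq_0[OF a] nz by blast
  then show ?thesis
    using fin unfolding V_def
    by (simp add: enn2real_positive_iff less_top[symmetric] zero_less_iff_neq_zero)
qed

lemma grad_weak_grad: "u \<in> D12 \<Longrightarrow> weak_grad u (grad u)"
  unfolding D12_def grad_def by (metis (mono_tags, lifting) mem_Collect_eq someI_ex)

lemma weak_grad_scale:
  assumes wg: "weak_grad u g"
  shows "weak_grad (\<lambda>x. c * u x) (\<lambda>x. c *\<^sub>R g x)"
proof -
  have [measurable]: "u \<in> borel_measurable lborel" "g \<in> borel_measurable lborel"
    using wg unfolding weak_grad_def by auto
  have "set_integrable lborel K (\<lambda>x. c * u x) \<and> set_integrable lborel K (\<lambda>x. c *\<^sub>R g x)"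
    if "compact K" for K
  proof -
    have u: "set_integrable lborel K u" and g: "set_integrable lborel K g"
      using wg that unfolding weak_grad_def by auto
    have "integrable lborel (\<lambda>x. c * (indicator K x *\<^sub>R u x))"
      using u unfolding set_integrable_def by (rule integrable_mult_right)
    moreover have "integrable lborel (\<lambda>x. c *\<^sub>R (indicator K x *\<^sub>R g x))"
      using g unfolding set_integrable_def by (rule integrable_scaleR_right)
    moreover have "(\<lambda>x. indicator K x *\<^sub>R (c * u x)) = (\<lambda>x. c * (indicator K x *\<^sub>R u x))"
      "(\<lambda>x. indicator K x *\<^sub>R (c *\<^sub>R g x)) = (\<lambda>x. c *\<^sub>R (indicator K x *\<^sub>R g x))"
      by (simp_all add: fun_eq_iff scaleR_left_commute)
    ultimately show ?thesis
      unfolding set_integrable_def by simp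
  qed
  moreover have "(\<integral>x. c * u x * pd i \<phi> x \<partial>lborel) = - (\<integral>x. (c *\<^sub>R g x) $ i * \<phi> x \<partial>lborel)"
    if "test_fun \<phi>" for \<phi> i
    using weak_grad_integral_by_parts[OF wg that, of i] by (simp add: mult.assoc)
  ultimately show ?thesis
    unfolding weak_grad_def by auto
qed

lemma D12_scale:
  assumes "u \<in> D12"
  shows "(\<lambda>x. c * u x) \<in> D12"
proof -
  obtain g where g: "weak_grad u g" "integrable lborel (\<lambda>x. (norm (g x))\<^sup>2)"
    and [measurable]: "u \<in> borel_measurable lborel" and u6: "integrable lborel (\<lambda>x. \<bar>u x\<bar> ^ 6)"
    using assms unfolding D12_def by blast
  have "integrable lborel (\<lambda>x. \<bar>c * u x\<bar> ^ 6)"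
    using integrable_mult_right[OF u6, of "\<bar>c\<bar> ^ 6"] by (simp add: abs_mult power_mult_distrib)
  moreover have "integrable lborel (\<lambda>x. (norm (c *\<^sub>R g x))\<^sup>2)"
    using integrable_mult_right[OF g(2), of "c\<^sup>2"] by (simp add: power_mult_distrib)
  moreover have "(\<lambda>x. c * u x) \<in> borel_measurable lborel"
    by measurable
  ultimately show ?thesis
    unfolding D12_def using weak_grad_scale[OF g(1)] by blast
qed

lemma Espace_scale:
  assumes "0 < a" "u \<in> Espace a"
  shows "(\<lambda>x. c * u x) \<in> Espace a"
proof -
  have "u \<in> D12" "u \<in> borel_measurable lborel" "Vnn a u < \<infinity>"
    using assms unfolding Espace_def D12_def by auto
  then show ?thesis
    using Vnn_scale[OF assms(1)] D12_scale unfolding Espace_def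
    by (simp add: ennreal_mult_less_top)
qed

lemma grad_sq_nonneg: "0 \<le> grad_sq u"
  unfolding grad_sq_def by simp

lemma grad_sq_scale:
  assumes u: "u \<in> D12"
  shows "grad_sq (\<lambda>x. c * u x) = c\<^sup>2 * grad_sq u"
proof -
  have wg: "weak_grad (\<lambda>x. c * u x) (grad (\<lambda>x. c * u x))" "weak_grad u (grad u)"
    using grad_weak_grad D12_scale u by auto
  then have "AE x in lborel. grad (\<lambda>x. c * u x) x = c *\<^sub>R grad u x"
    using weak_grad_unique weak_grad_scale by blast
  moreover have [measurable]: "grad (\<lambda>x. c * u x) \<in> borel_measurable lborel" "grad u \<in> borel_measurable lborel"
    using wg unfolding weak_grad_def by auto
  ultimately have "grad_sq (\<lambda>x. c * u x) = (\<integral>x. (norm (c *\<^sub>R grad u x))\<^sup>2 \<partial>lborel)"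
    unfolding grad_sq_def by (intro integral_cong_AE) auto
  then show ?thesis
    by (simp add: grad_sq_def power_mult_distrib)
qed

lemma Enorm_nonneg: "0 \<le> Enorm a u"
  unfolding Enorm_def by (simp add: grad_sq_nonneg V_def)

lemma Enorm_scale:
  assumes "0 < a" "u \<in> Espace a"
  shows "Enorm a (\<lambda>x. c * u x) = \<bar>c\<bar> * Enorm a u"
proof -
  have "u \<in> D12" "u \<in> borel_measurable lborel"
    using assms unfolding Espace_def D12_def by auto
  moreover have "sqrt (c ^ 4 * V a u) = c\<^sup>2 * sqrt (V a u)"
  proof -
    have "c ^ 4 = (c\<^sup>2)\<^sup>2"
      by simp
    then show ?thesis
      unfolding real_sqrt_mult by (simp only: real_sqrt_abs abs_power2)
  qed
  ultimately have "Enorm a (\<lambda>x. c * u x) = sqrt (c\<^sup>2 * (grad_sq u + sqrt (V a u)))"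
    unfolding Enorm_def using grad_sq_scale V_scale[OF assms(1)] by (simp add: algebra_simps)
  then show ?thesis
    by (simp add: Enorm_def real_sqrt_mult)
qed

lemma Ia_scale:
  assumes "0 < a" "u \<in> Espace a" "0 \<le> s"
  shows "Ia a q p (\<lambda>x. s * u x) = fiber p (grad_sq u) (q\<^sup>2 * V a u) (\<integral>x. \<bar>u x\<bar> powr p \<partial>lborel) s"
proof -
  have "u \<in> D12" "u \<in> borel_measurable lborel"
    using assms unfolding Espace_def D12_def by auto
  moreover have "(\<integral>x. \<bar>s * u x\<bar> powr p \<partial>lborel) = s powr p * (\<integral>x. \<bar>u x\<bar> powr p \<partial>lborel)"
    using assms(3) by (simp add: abs_mult powr_mult)
  ultimately show ?thesis
    unfolding Ia_def fiber_def using grad_sq_scale V_scale[OF assms(1)] by simp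
qed

section \<open>The Nehari identity and the ray through a solution\<close>

lemma abs_powr_minus_two_mult_self: "\<bar>y\<bar> powr (p - 2) * y * y = \<bar>y\<bar> powr (p::real)"
proof (cases "y = 0")
  case False
  have "\<bar>y\<bar> powr p = \<bar>y\<bar> powr ((p - 2) + 2)"
    by simp
  also have "\<dots> = \<bar>y\<bar> powr (p - 2) * \<bar>y\<bar> powr 2"
    by (rule powr_add)
  finally show ?thesis
    using False by (simp add: power2_eq_square mult.assoc)
qed simp

lemma weak_solution_nehari:
  assumes "0 < a" "weak_solution a q p u"
  shows "(\<integral>x. \<bar>u x\<bar> powr p \<partial>lborel) = grad_sq u + q\<^sup>2 * V a u"
proof -
  have u: "u \<in> Espace a" and "Ia_deriv a q p u u = 0"
    using assms(2) unfolding weak_solution_def by auto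
  have "u \<in> borel_measurable lborel" "Vnn a u < \<infinity>"
    using u unfolding Espace_def D12_def by auto
  then have "Ia_deriv a q p u u = grad_sq u + q\<^sup>2 * V a u - (\<integral>x. \<bar>u x\<bar> powr p \<partial>lborel)"
    unfolding Ia_deriv_def grad_sq_def
    by (simp add: integral_phi_u_mult_sq[OF assms(1)] power2_norm_eq_inner abs_powr_minus_two_mult_self)
  then show ?thesis
    using \<open>Ia_deriv a q p u u = 0\<close> by simp
qed

lemma Epath_ray:
  assumes a: "0 < a" and u: "u \<in> Espace a"
  shows "Epath a (\<lambda>t x. (c * t) * u x)"
  unfolding Epath_def
proof (intro conjI ballI allI impI)
  show "(\<lambda>x. (c * t) * u x) \<in> Espace a" for t
    by (rule Espace_scale[OF a u])
  fix t e :: real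
  assume "0 < e"
  define K where "K = \<bar>c\<bar> * Enorm a u + 1"
  have "0 \<le> \<bar>c\<bar> * Enorm a u"
    by (simp add: Enorm_nonneg)
  then have "0 < K"
    unfolding K_def by simp
  show "\<exists>d>0. \<forall>s\<in>{0..1}. \<bar>s - t\<bar> < d \<longrightarrow> Enorm a (\<lambda>x. c * s * u x - c * t * u x) < e"
  proof (intro exI[of _ "e / K"] conjI ballI impI)
    show "0 < e / K"
      using \<open>0 < e\<close> \<open>0 < K\<close> by simp
    fix s
    assume "\<bar>s - t\<bar> < e / K"
    have "(\<lambda>x. c * s * u x - c * t * u x) = (\<lambda>x. (c * (s - t)) * u x)"
      by (simp add: fun_eq_iff algebra_simps)
    then have "Enorm a (\<lambda>x. c * s * u x - c * t * u x) = \<bar>s - t\<bar> * (\<bar>c\<bar> * Enorm a u)"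
      using Enorm_scale[OF a u, of "c * (s - t)"] by (simp add: abs_mult)
    also have "\<dots> \<le> \<bar>s - t\<bar> * K"
      unfolding K_def by (intro mult_left_mono) auto
    also have "\<dots> < e / K * K"
      using \<open>\<bar>s - t\<bar> < e / K\<close> \<open>0 < K\<close> by (rule mult_strict_right_mono)
    finally show "Enorm a (\<lambda>x. c * s * u x - c * t * u x) < e"
      using \<open>0 < K\<close> by simp
  qed
qed

theorem proposition3p2:
  fixes a q p :: real and u :: "R3 \<Rightarrow> real"
  assumes "a > 0" and "q \<noteq> 0" and "4 < p" and "p < 6"
    and "u \<in> Espace a" and "\<not> (AE x in lborel. u x = 0)"
    and "weak_solution a q p u"
  shows "ereal (Ia a q p u) \<ge> c_a a q p"
proof -
  define A where "A = grad_sq u"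
  define B where "B = q\<^sup>2 * V a u"
  define T where "T = p powr (1 / (p - 4))"
  have A: "0 \<le> A" and B: "0 \<le> B" and AB: "0 < A + B"
    using grad_sq_nonneg V_pos[OF assms(1,5,6)] \<open>q \<noteq> 0\<close> unfolding A_def B_def
    by (auto intro: add_nonneg_pos)
  have "(\<integral>x. \<bar>u x\<bar> powr p \<partial>lborel) = A + B"
    using weak_solution_nehari[OF assms(1,7)] unfolding A_def B_def by simp
  then have Ia_ray: "Ia a q p (\<lambda>x. s * u x) = fiber p A B (A + B) s" if "0 \<le> s" for s
    using Ia_scale[OF assms(1,5) that] unfolding A_def B_def by simp
  have "(\<lambda>t x. (T * t) * u x) \<in> Gamma a q p"
    using Epath_ray[OF assms(1,5)] Ia_ray[of T] fiber_neg[OF A B AB \<open>4 < p\<close>]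
    unfolding Gamma_def T_def by simp
  then have "c_a a q p \<le> (SUP t\<in>{0..1}. ereal (Ia a q p (\<lambda>x. (T * t) * u x)))"
    unfolding c_a_def by (rule INF_lower)
  also have "\<dots> \<le> ereal (Ia a q p u)"
    using Ia_ray fiber_le_fiber_one[OF A B \<open>4 < p\<close>] Ia_ray[of 1]
    by (intro SUP_least) (simp add: T_def)
  finally show ?thesis .
qed

end
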